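(* Let $a_{n,k}$ be the number of matchings of size $n$ with exactly $k$ occurrences of the endhered pattern $21$, let $b_{n,k}=a_{n+1,k}$ for $n,k\ge0$, and let $$B(z,u)=\sum_{n\ge0}\sum_{k=0}^{n}b_{n,k}\frac{z^n}{n!}u^k.$$ Then $$B(z,u)=\frac{e^{z(u-1)}}{\sqrt{(1-2z)^3}}.$$ In particular, for every $k\ge0$, $[u^k]B(z,u)=\dfrac{z^k}{k!}\cdot\dfrac{e^{-z}}{\sqrt{(1-2z)^3}}$.
   Context: A matching of size $n$ is a set of $n$ arcs $(a,b)$ with $1\le a<b\le 2n$ such that each point of $\{1,\dots,2n\}$ belongs to exactly one arc. An occurrence of the endhered pattern $21$ in a matching $\mu$ is a pair of arcs of $\mu$ of the form $(i+1,j+2),(i+2,j+1)$ (two nested arcs with consecutive starting points and consecutive ending points); the number of occurrences is the number of such pairs. $[u^k]$ denotes extraction of the coefficient of $u^k$; identities are of formal power series. *)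

theory Defs
  imports "HOL-Computational_Algebra.Formal_Power_Series"
begin

definition matchings :: "nat \<Rightarrow> (nat \<times> nat) set set" where
  "matchings n = {M. M \<subseteq> {(a, b). 1 \<le> a \<and> a < b \<and> b \<le> 2 * n} \<and>
      (\<forall>p \<in> {1..2 * n}. \<exists>!e. e \<in> M \<and> (fst e = p \<or> snd e = p))}"

definition occ21 :: "(nat \<times> nat) set \<Rightarrow> nat" where
  "occ21 M = card {(i, j). (i + 1, j + 2) \<in> M \<and> (i + 2, j + 1) \<in> M}"

definition a_nk :: "nat \<Rightarrow> nat \<Rightarrow> nat" where
  "a_nk n k = card {M \<in> matchings n. occ21 M = k}"

definition b_nk :: "nat \<Rightarrow> nat \<Rightarrow> nat" where
  "b_nk n k = a_nk (Suc n) k"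

text \<open>Bivariate series are represented as power series in z whose coefficients are power series in u.\<close>
definition B_series :: "real fps fps" where
  "B_series = Abs_fps (\<lambda>n. Abs_fps (\<lambda>k. real (b_nk n k) / fact n))"

definition fps_lift :: "real fps \<Rightarrow> real fps fps" where
  "fps_lift f = Abs_fps (\<lambda>n. fps_const (fps_nth f n))"

definition exp_zu1 :: "real fps fps" where
  "exp_zu1 = Abs_fps (\<lambda>n. fps_const (1 / fact n) * (fps_X - 1) ^ n)"

definition sqrt_1m2z_cubed :: "real fps" where
  "sqrt_1m2z_cubed = fps_radical (\<lambda>k x. root k x) 2 ((1 - 2 * fps_X) ^ 3)"

end

theory Submission
  imports Defs
begin

(* Inserting a new arc (a+1, b+1) just inside an arc (a, b) of a matching makes the shifted arc
   (a, b+2) the outer arc of a new occurrence of 21; every other occurrence survives, the one with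
   outer arc (a, b) passing to the new arc.  Since every occurrence arises in this way from exactly
   one matching with a marked arc, double counting gives (k+1) b(n+1,k+1) = (n+1) b(n,k).  Hence the
   k-th column of B is z^k/k! times the column C(z) for k = 0, and summing the columns shows that
   e^z C(z) is the exponential generating function of the (2n+1)!! matchings of size n+1.  That
   series D(z) solves (1-2z) D' = 3 D, so D = (1-2z)^(-3/2), C = e^(-z) D and B = e^(zu) C. *)

unbundle fps_syntax

section \<open>Matchings\<close>

definition arcs :: "nat \<Rightarrow> (nat \<times> nat) set" where
  "arcs n = {(a, b). 1 \<le> a \<and> a < b \<and> b \<le> 2 * n}"

definition is_matching :: "nat \<Rightarrow> (nat \<times> nat) set \<Rightarrow> bool" where
  "is_matching n M \<longleftrightarrow> M \<subseteq> arcs n \<and>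
     (\<forall>a b c d. (a, b) \<in> M \<longrightarrow> (c, d) \<in> M \<longrightarrow> (a = c \<or> a = d \<or> b = c \<or> b = d) \<longrightarrow> a = c \<and> b = d) \<and>
     (\<forall>p \<in> {1..2 * n}. \<exists>a b. (a, b) \<in> M \<and> (a = p \<or> b = p))"

lemma is_matchingI:
  assumes "\<And>a b. (a, b) \<in> M \<Longrightarrow> 1 \<le> a \<and> a < b \<and> b \<le> 2 * n"
    and "\<And>a b c d. (a, b) \<in> M \<Longrightarrow> (c, d) \<in> M \<Longrightarrow> a = c \<or> a = d \<or> b = c \<or> b = d \<Longrightarrow> a = c \<and> b = d"
    and "\<And>p. p \<in> {1..2 * n} \<Longrightarrow> \<exists>a b. (a, b) \<in> M \<and> (a = p \<or> b = p)"
  shows "is_matching n M"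
proof -
  have "M \<subseteq> arcs n" using assms(1) unfolding arcs_def by auto
  moreover have "\<forall>a b c d. (a, b) \<in> M \<longrightarrow> (c, d) \<in> M \<longrightarrow> (a = c \<or> a = d \<or> b = c \<or> b = d) \<longrightarrow> a = c \<and> b = d"
    using assms(2) by blast
  moreover have "\<forall>p \<in> {1..2 * n}. \<exists>a b. (a, b) \<in> M \<and> (a = p \<or> b = p)"
    using assms(3) by blast
  ultimately show ?thesis unfolding is_matching_def by blast
qed

lemma matching_arcD: "is_matching n M \<Longrightarrow> (a, b) \<in> M \<Longrightarrow> 1 \<le> a \<and> a < b \<and> b \<le> 2 * n"
  unfolding is_matching_def arcs_def by blast

lemma matching_common_endpoint:
  "is_matching n M \<Longrightarrow> (a, b) \<in> M \<Longrightarrow> (c, d) \<in> M \<Longrightarrow> a = c \<or> a = d \<or> b = c \<or> b = d \<Longrightarrow> a = c \<and> b = d"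
  unfolding is_matching_def by blast

lemma matching_coverD:
  "is_matching n M \<Longrightarrow> p \<in> {1..2 * n} \<Longrightarrow> \<exists>a b. (a, b) \<in> M \<and> (a = p \<or> b = p)"
  unfolding is_matching_def by blast

lemma matching_other_arc:
  "is_matching n M \<Longrightarrow> (x, y) \<in> M \<Longrightarrow> (p, q) \<in> M \<Longrightarrow> (p, q) \<noteq> (x, y) \<Longrightarrow> p \<notin> {x, y} \<and> q \<notin> {x, y}"
  using matching_common_endpoint[of n M p q x y] by blast

lemma matching_unique_arc:
  assumes M: "is_matching n M" and p: "p \<in> {1..2 * n}"
  shows "\<exists>!e. e \<in> M \<and> (fst e = p \<or> snd e = p)"
proof -
  obtain a b where ab: "(a, b) \<in> M" "a = p \<or> b = p"
    using matching_coverD[OF M p] by blast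
  show ?thesis
  proof (rule ex1I[of _ "(a, b)"])
    fix e assume e: "e \<in> M \<and> (fst e = p \<or> snd e = p)"
    then have "fst e = a \<and> snd e = b"
      using matching_common_endpoint[OF M, of "fst e" "snd e" a b] ab by (metis prod.collapse)
    then show "e = (a, b)" by (simp add: prod_eq_iff)
  qed (use ab in simp)
qed

lemma in_matchings_iff: "M \<in> matchings n \<longleftrightarrow> is_matching n M"
proof
  assume "M \<in> matchings n"
  then have sub: "M \<subseteq> arcs n" and unique: "\<And>p. p \<in> {1..2 * n} \<Longrightarrow> \<exists>!e. e \<in> M \<and> (fst e = p \<or> snd e = p)"
    unfolding matchings_def arcs_def by auto
  show "is_matching n M"
  proof (rule is_matchingI)
    show "1 \<le> a \<and> a < b \<and> b \<le> 2 * n" if "(a, b) \<in> M" for a b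
      using sub that unfolding arcs_def by blast
  next
    fix a b c d assume ab: "(a, b) \<in> M" and cd: "(c, d) \<in> M" and "a = c \<or> a = d \<or> b = c \<or> b = d"
    then obtain p where p: "p \<in> {a, b}" "p \<in> {c, d}" by blast
    have "p \<in> {1..2 * n}" using p sub ab cd unfolding arcs_def by auto
    then have "\<exists>!e. e \<in> M \<and> (fst e = p \<or> snd e = p)" by (rule unique)
    moreover have "(a, b) \<in> M \<and> (fst (a, b) = p \<or> snd (a, b) = p)"
      and "(c, d) \<in> M \<and> (fst (c, d) = p \<or> snd (c, d) = p)"
      using ab cd p by auto
    ultimately have "(a, b) = (c, d)" by blast
    then show "a = c \<and> b = d" by simp
  next
    fix p assume "p \<in> {1..2 * n}"
    then have "\<exists>!e. e \<in> M \<and> (fst e = p \<or> snd e = p)" by (rule unique)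
    then obtain e where "e \<in> M" "fst e = p \<or> snd e = p" by blast
    then show "\<exists>a b. (a, b) \<in> M \<and> (a = p \<or> b = p)" by (metis prod.collapse)
  qed
next
  assume M: "is_matching n M"
  then have "M \<subseteq> arcs n" unfolding is_matching_def by blast
  with matching_unique_arc[OF M] show "M \<in> matchings n" unfolding matchings_def arcs_def by simp
qed

text \<open>For \<open>x < y\<close>, \<open>open_gap x y\<close> is the increasing enumeration of \<open>\<nat> - {x, y}\<close>
  and \<open>close_gap x y\<close> is its inverse.\<close>

definition open_gap :: "nat \<Rightarrow> nat \<Rightarrow> nat \<Rightarrow> nat" where
  "open_gap x y q = (if q < x then q else if q + 1 < y then q + 1 else q + 2)"

definition close_gap :: "nat \<Rightarrow> nat \<Rightarrow> nat \<Rightarrow> nat" where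
  "close_gap x y p = p - (if x < p then 1 else 0) - (if y < p then 1 else 0)"

lemma close_open_gap [simp]: "x < y \<Longrightarrow> close_gap x y (open_gap x y q) = q"
  unfolding close_gap_def open_gap_def by auto

lemma open_close_gap [simp]: "x < y \<Longrightarrow> p \<notin> {x, y} \<Longrightarrow> open_gap x y (close_gap x y p) = p"
  unfolding close_gap_def open_gap_def by auto

lemma map_prod_close_open_gap [simp]:
  "x < y \<Longrightarrow> map_prod (close_gap x y) (close_gap x y) (map_prod (open_gap x y) (open_gap x y) e) = e"
  by (cases e) simp

lemma open_gap_neq: "x < y \<Longrightarrow> open_gap x y q \<noteq> x" "x < y \<Longrightarrow> open_gap x y q \<noteq> y"
  unfolding open_gap_def by auto

lemma open_gap_less_iff [simp]: "x < y \<Longrightarrow> open_gap x y p < open_gap x y q \<longleftrightarrow> p < q"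
  unfolding open_gap_def by auto

lemma open_gap_eq_iff [simp]: "x < y \<Longrightarrow> open_gap x y p = open_gap x y q \<longleftrightarrow> p = q"
  unfolding open_gap_def by auto

lemma open_gap_eq_Suc: "x < y \<Longrightarrow> open_gap x y s = Suc (open_gap x y p) \<Longrightarrow> s = Suc p"
  unfolding open_gap_def by (auto split: if_splits)

lemma open_gap_Suc: "x < y \<Longrightarrow> Suc p \<noteq> x \<Longrightarrow> Suc (Suc p) \<noteq> y \<Longrightarrow> open_gap x y (Suc p) = Suc (open_gap x y p)"
  unfolding open_gap_def by auto

lemma open_gap_Suc_Suc: "a < b \<Longrightarrow> open_gap (Suc a) (Suc b) a = a" "a < b \<Longrightarrow> open_gap (Suc a) (Suc b) b = b + 2"
  unfolding open_gap_def by auto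

definition insert_arc :: "nat \<Rightarrow> nat \<Rightarrow> (nat \<times> nat) set \<Rightarrow> (nat \<times> nat) set" where
  "insert_arc x y M = insert (x, y) (map_prod (open_gap x y) (open_gap x y) ` M)"

definition remove_arc :: "nat \<Rightarrow> nat \<Rightarrow> (nat \<times> nat) set \<Rightarrow> (nat \<times> nat) set" where
  "remove_arc x y M = map_prod (close_gap x y) (close_gap x y) ` (M - {(x, y)})"

lemma open_gap_arc_mem_insert_arc [simp]:
  "x < y \<Longrightarrow> (open_gap x y p, open_gap x y q) \<in> insert_arc x y M \<longleftrightarrow> (p, q) \<in> M"
  unfolding insert_arc_def using open_gap_neq by auto

lemma remove_insert_arc [simp]: "x < y \<Longrightarrow> remove_arc x y (insert_arc x y M) = M"
proof -
  assume xy: "x < y"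
  have "insert_arc x y M - {(x, y)} = map_prod (open_gap x y) (open_gap x y) ` M"
    unfolding insert_arc_def using open_gap_neq[OF xy] by auto
  then show ?thesis
    unfolding remove_arc_def using xy by (simp add: image_image)
qed

lemma insert_remove_arc:
  assumes M: "is_matching n M" and xy: "(x, y) \<in> M"
  shows "insert_arc x y (remove_arc x y M) = M"
proof -
  have "x < y" using matching_arcD[OF M xy] by simp
  have "map_prod (open_gap x y) (open_gap x y) (map_prod (close_gap x y) (close_gap x y) e) = e"
    if "e \<in> M - {(x, y)}" for e
    using matching_other_arc[OF M xy, of "fst e" "snd e"] that \<open>x < y\<close> by (cases e) auto
  then have "map_prod (open_gap x y) (open_gap x y) ` remove_arc x y M = M - {(x, y)}"
    unfolding remove_arc_def image_image by simp
  then show ?thesis unfolding insert_arc_def using xy by auto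
qed

lemma open_gap_arc_iff:
  assumes "1 \<le> x" "x < y" "y \<le> 2 * Suc n"
  shows "(open_gap x y c, open_gap x y d) \<in> arcs (Suc n) \<longleftrightarrow> (c, d) \<in> arcs n"
  using assms unfolding arcs_def open_gap_def by auto

lemma open_gap_point_iff:
  assumes "1 \<le> x" "x < y" "y \<le> 2 * Suc n"
  shows "open_gap x y t \<in> {1..2 * Suc n} \<longleftrightarrow> t \<in> {1..2 * n}"
  using assms unfolding open_gap_def by auto

lemma insert_arc_common_endpoint:
  assumes M: "is_matching n M" and xy: "x < y"
    and ab: "(a, b) \<in> insert_arc x y M" and cd: "(c, d) \<in> insert_arc x y M"
    and common: "a = c \<or> a = d \<or> b = c \<or> b = d"
  shows "a = c \<and> b = d"
proof -
  have new: "p \<notin> {x, y} \<and> q \<notin> {x, y}" if "(p, q) \<in> insert_arc x y M" "(p, q) \<noteq> (x, y)" for p q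
    using that open_gap_neq[OF xy] unfolding insert_arc_def by auto
  show ?thesis
  proof (cases "(a, b) = (x, y) \<or> (c, d) = (x, y)")
    case True
    then show ?thesis using new[OF ab] new[OF cd] common by auto
  next
    case False
    then obtain a' b' c' d' where M': "(a', b') \<in> M" "(c', d') \<in> M"
      and eqs: "a = open_gap x y a'" "b = open_gap x y b'" "c = open_gap x y c'" "d = open_gap x y d'"
      using ab cd unfolding insert_arc_def by auto
    have "a' = c' \<or> a' = d' \<or> b' = c' \<or> b' = d'" using common xy unfolding eqs by simp
    then have "a' = c' \<and> b' = d'" by (rule matching_common_endpoint[OF M M'])
    then show ?thesis unfolding eqs by simp
  qed
qed

lemma insert_arc_is_matching:
  assumes M: "is_matching n M" and xy: "1 \<le> x" "x < y" "y \<le> 2 * Suc n"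
  shows "is_matching (Suc n) (insert_arc x y M)"
proof (rule is_matchingI)
  fix a b assume "(a, b) \<in> insert_arc x y M"
  then consider "(a, b) = (x, y)" | c d where "(c, d) \<in> M" "a = open_gap x y c" "b = open_gap x y d"
    unfolding insert_arc_def by auto
  then show "1 \<le> a \<and> a < b \<and> b \<le> 2 * Suc n"
  proof cases
    case 2
    then have "(a, b) \<in> arcs (Suc n)"
      using open_gap_arc_iff[OF xy] M unfolding is_matching_def by blast
    then show ?thesis unfolding arcs_def by simp
  qed (use xy in simp)
next
  show "a = c \<and> b = d"
    if "(a, b) \<in> insert_arc x y M" "(c, d) \<in> insert_arc x y M" "a = c \<or> a = d \<or> b = c \<or> b = d"
    for a b c d
    using insert_arc_common_endpoint[OF M xy(2) that] .
next
  fix t assume t: "t \<in> {1..2 * Suc n}"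
  show "\<exists>a b. (a, b) \<in> insert_arc x y M \<and> (a = t \<or> b = t)"
  proof (cases "t \<in> {x, y}")
    case True
    then show ?thesis unfolding insert_arc_def by blast
  next
    case False
    then have "open_gap x y (close_gap x y t) = t" using xy(2) by simp
    moreover have "close_gap x y t \<in> {1..2 * n}"
      using t calculation open_gap_point_iff[OF xy, of "close_gap x y t"] by simp
    then obtain c d where "(c, d) \<in> M" "c = close_gap x y t \<or> d = close_gap x y t"
      using matching_coverD[OF M] by blast
    ultimately show ?thesis
      using open_gap_arc_mem_insert_arc[OF xy(2), of c d M] by metis
  qed
qed

lemma is_matching_insert_arcD:
  assumes M: "is_matching (Suc n) (insert_arc x y M)" and xy: "1 \<le> x" "x < y" "y \<le> 2 * Suc n"
  shows "is_matching n M"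
proof (rule is_matchingI)
  fix a b assume "(a, b) \<in> M"
  then have "(open_gap x y a, open_gap x y b) \<in> arcs (Suc n)"
    using M xy(2) unfolding is_matching_def by auto
  then show "1 \<le> a \<and> a < b \<and> b \<le> 2 * n"
    using open_gap_arc_iff[OF xy] unfolding arcs_def by simp
next
  fix a b c d assume "(a, b) \<in> M" "(c, d) \<in> M" "a = c \<or> a = d \<or> b = c \<or> b = d"
  then have "(open_gap x y a, open_gap x y b) \<in> insert_arc x y M"
    and "(open_gap x y c, open_gap x y d) \<in> insert_arc x y M"
    "open_gap x y a = open_gap x y c \<or> open_gap x y a = open_gap x y d \<or>
     open_gap x y b = open_gap x y c \<or> open_gap x y b = open_gap x y d"
    using xy(2) by auto
  then have "open_gap x y a = open_gap x y c \<and> open_gap x y b = open_gap x y d"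
    by (rule matching_common_endpoint[OF M])
  then show "a = c \<and> b = d" using xy(2) by simp
next
  fix t assume "t \<in> {1..2 * n}"
  then have "open_gap x y t \<in> {1..2 * Suc n}" using open_gap_point_iff[OF xy] by simp
  then obtain a b where ab: "(a, b) \<in> insert_arc x y M" "a = open_gap x y t \<or> b = open_gap x y t"
    using matching_coverD[OF M] by blast
  moreover have "(a, b) \<noteq> (x, y)" using ab(2) open_gap_neq[OF xy(2), of t] by force
  ultimately obtain c d where "(c, d) \<in> M" "a = open_gap x y c" "b = open_gap x y d"
    unfolding insert_arc_def by auto
  then show "\<exists>c d. (c, d) \<in> M \<and> (c = t \<or> d = t)" using ab(2) xy(2) by auto
qed

lemma remove_arc_is_matching:
  assumes M: "is_matching (Suc n) M" and xy: "(x, y) \<in> M"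
  shows "is_matching n (remove_arc x y M)"
proof (rule is_matching_insert_arcD)
  show "is_matching (Suc n) (insert_arc x y (remove_arc x y M))"
    using insert_remove_arc[OF M xy] M by simp
  show "1 \<le> x" "x < y" "y \<le> 2 * Suc n" using matching_arcD[OF M xy] by auto
qed

lemma insert_arc_inject:
  assumes N: "is_matching n (insert_arc x y M)" and "x < y" "x < y'"
    and eq: "insert_arc x y M = insert_arc x y' M'"
  shows "y = y' \<and> M = M'"
proof -
  have "(x, y) \<in> insert_arc x y M" by (simp add: insert_arc_def)
  moreover have "(x, y') \<in> insert_arc x y M" unfolding eq by (simp add: insert_arc_def)
  ultimately have "y = y'" using matching_common_endpoint[OF N] by blast
  have "M = remove_arc x y (insert_arc x y M)" using \<open>x < y\<close> by simp
  also have "\<dots> = M'" using eq \<open>y = y'\<close> \<open>x < y'\<close> by simp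
  finally show ?thesis using \<open>y = y'\<close> by simp
qed

lemma finite_arcs: "finite (arcs n)"
  by (rule finite_subset[of _ "{0..2 * n} \<times> {0..2 * n}"]) (auto simp: arcs_def)

lemma finite_matching: "is_matching n M \<Longrightarrow> finite M"
  using finite_arcs finite_subset unfolding is_matching_def by blast

lemma finite_matchings: "finite (matchings n)"
  by (rule finite_subset[of _ "Pow (arcs n)"]) (auto simp: in_matchings_iff is_matching_def finite_arcs)

lemma card_insert_arc:
  assumes "x < y" "finite M"
  shows "card (insert_arc x y M) = Suc (card M)"
proof -
  have "inj (map_prod (open_gap x y) (open_gap x y))"
    using assms(1) by (simp add: prod.inj_map inj_def)
  moreover have "(x, y) \<notin> map_prod (open_gap x y) (open_gap x y) ` M"
    using open_gap_neq[OF assms(1)] by (auto dest: sym)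
  ultimately show ?thesis
    unfolding insert_arc_def using assms(2) by (simp add: card_image inj_on_subset)
qed

lemma card_matching: "is_matching n M \<Longrightarrow> card M = n"
proof (induction n arbitrary: M)
  case 0
  then have "M = {}" using matching_arcD by fastforce
  then show ?case by simp
next
  case (Suc n)
  obtain x y where xy: "(x, y) \<in> M" using matching_coverD[OF Suc.prems, of 1] by auto
  have "x < y" using matching_arcD[OF Suc.prems xy] by simp
  have "card M = card (insert_arc x y (remove_arc x y M))" using insert_remove_arc[OF Suc.prems xy] by simp
  also have "\<dots> = Suc n"
    using card_insert_arc[OF \<open>x < y\<close>] finite_matching Suc.IH remove_arc_is_matching[OF Suc.prems xy] by simp
  finally show ?case .
qed

lemma card_matchings_Suc: "card (matchings (Suc n)) = (2 * n + 1) * card (matchings n)"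
proof -
  define f where "f = (\<lambda>(y, M). insert_arc 1 y M)"
  have "inj_on f ({2..2 * Suc n} \<times> matchings n)"
  proof (rule inj_onI)
    fix u u' assume u: "u \<in> {2..2 * Suc n} \<times> matchings n" and u': "u' \<in> {2..2 * Suc n} \<times> matchings n"
      and eq: "f u = f u'"
    obtain y M y' M' where uu: "u = (y, M)" "u' = (y', M')" by fastforce
    have "is_matching (Suc n) (insert_arc 1 y M)"
      using u insert_arc_is_matching[of n M 1 y] unfolding uu by (simp add: in_matchings_iff)
    then show "u = u'" using insert_arc_inject[of "Suc n" 1 y M y' M'] u u' eq unfolding uu f_def by simp
  qed
  moreover have "f ` ({2..2 * Suc n} \<times> matchings n) = matchings (Suc n)"
  proof (intro equalityI subsetI)
    fix M assume "M \<in> f ` ({2..2 * Suc n} \<times> matchings n)"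
    then show "M \<in> matchings (Suc n)"
      by (auto simp: f_def in_matchings_iff intro: insert_arc_is_matching)
  next
    fix M assume "M \<in> matchings (Suc n)"
    then have M: "is_matching (Suc n) M" by (simp add: in_matchings_iff)
    obtain a b where ab: "(a, b) \<in> M" "a = 1 \<or> b = 1" using matching_coverD[OF M, of 1] by auto
    with matching_arcD[OF M] have "a = 1" "b \<in> {2..2 * Suc n}" by fastforce+
    then have "(b, remove_arc 1 b M) \<in> {2..2 * Suc n} \<times> matchings n"
      using remove_arc_is_matching[OF M] ab(1) by (simp add: in_matchings_iff)
    moreover have "M = f (b, remove_arc 1 b M)"
      unfolding f_def using insert_remove_arc[OF M] ab(1) \<open>a = 1\<close> by simp
    ultimately show "M \<in> f ` ({2..2 * Suc n} \<times> matchings n)" by blast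
  qed
  ultimately have "card (matchings (Suc n)) = card ({2..2 * Suc n} \<times> matchings n)"
    by (metis card_image)
  then show ?thesis by (simp add: card_cartesian_product)
qed

lemma matchings_0: "matchings 0 = {{}}"
proof -
  have "M = {}" if "is_matching 0 M" for M
    using matching_arcD[OF that] by fastforce
  moreover have "is_matching 0 {}" by (rule is_matchingI) simp_all
  ultimately show ?thesis unfolding set_eq_iff in_matchings_iff by blast
qed

section \<open>Occurrences of the pattern 21\<close>

text \<open>An occurrence \<open>(i+1, j+2), (i+2, j+1)\<close> of the pattern is recorded by its outer arc.\<close>

definition occ21_arcs :: "(nat \<times> nat) set \<Rightarrow> (nat \<times> nat) set" where
  "occ21_arcs M = {(p, q) \<in> M. (Suc p, q - 1) \<in> M}"

lemma occ21_eq_card_occ21_arcs: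
  assumes M: "is_matching n M"
  shows "occ21 M = card (occ21_arcs M)"
proof -
  let ?occ = "{(i, j). (i + 1, j + 2) \<in> M \<and> (i + 2, j + 1) \<in> M}"
  have "occ21_arcs M = (\<lambda>(i, j). (i + 1, j + 2)) ` ?occ"
  proof (intro equalityI subsetI)
    fix e assume e: "e \<in> occ21_arcs M"
    then obtain p q where pq: "e = (p, q)" "(p, q) \<in> M" "(Suc p, q - 1) \<in> M"
      unfolding occ21_arcs_def by auto
    have "1 \<le> p" "Suc p < q - 1" using matching_arcD[OF M pq(2)] matching_arcD[OF M pq(3)] by auto
    then have "p = (p - 1) + 1" "q = (q - 2) + 2" by arith+
    then obtain i j where "p = i + 1" "q = j + 2" by blast
    then have "(i, j) \<in> ?occ" "e = (i + 1, j + 2)" using pq by simp_all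
    then show "e \<in> (\<lambda>(i, j). (i + 1, j + 2)) ` ?occ" by (intro image_eqI[of _ _ "(i, j)"]) simp_all
  qed (auto simp: occ21_arcs_def)
  moreover have "inj_on (\<lambda>(i, j). (i + 1, j + 2 :: nat)) ?occ"
    by (auto simp: inj_on_def)
  ultimately show ?thesis unfolding occ21_def by (simp add: card_image)
qed

lemma finite_occ21_arcs: "is_matching n M \<Longrightarrow> finite (occ21_arcs M)"
  using finite_matching by (rule finite_subset[rotated]) (auto simp: occ21_arcs_def)

context
  fixes m a b :: nat and M :: "(nat \<times> nat) set"
  assumes M: "is_matching m M" and ab: "(a, b) \<in> M"
begin

lemma matching_arc_less: "a < b"
  using matching_arcD[OF M ab] by simp

lemmas open_gap_endpoints = open_gap_Suc_Suc[OF matching_arc_less]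

lemma occ21_arcs_insert_arc_new:
  "(Suc a, Suc b) \<in> occ21_arcs (insert_arc (Suc a) (Suc b) M) \<longleftrightarrow> (a, b) \<in> occ21_arcs M"
proof
  assume "(Suc a, Suc b) \<in> occ21_arcs (insert_arc (Suc a) (Suc b) M)"
  then have "(a + 2, b) \<in> insert_arc (Suc a) (Suc b) M" unfolding occ21_arcs_def by simp
  then obtain s t where st: "(s, t) \<in> M" "open_gap (Suc a) (Suc b) s = a + 2" "open_gap (Suc a) (Suc b) t = b"
    unfolding insert_arc_def by auto
  then have "s = Suc a" "t = b - 1" using matching_arc_less unfolding open_gap_def by (auto split: if_splits)
  then show "(a, b) \<in> occ21_arcs M" using st(1) ab unfolding occ21_arcs_def by simp
next
  assume "(a, b) \<in> occ21_arcs M"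
  then have inner: "(Suc a, b - 1) \<in> M" unfolding occ21_arcs_def by simp
  then have "Suc a < b - 1" using matching_arcD[OF M] by blast
  then have "open_gap (Suc a) (Suc b) (Suc a) = a + 2" "open_gap (Suc a) (Suc b) (b - 1) = b"
    unfolding open_gap_def by auto
  then have "(a + 2, b) \<in> insert_arc (Suc a) (Suc b) M"
    using open_gap_arc_mem_insert_arc[of "Suc a" "Suc b" "Suc a" "b - 1" M] inner matching_arc_less by simp
  then show "(Suc a, Suc b) \<in> occ21_arcs (insert_arc (Suc a) (Suc b) M)"
    unfolding occ21_arcs_def insert_arc_def by simp
qed

lemma occ21_arcs_insert_arc_outer: "(a, b + 2) \<in> occ21_arcs (insert_arc (Suc a) (Suc b) M)"
proof -
  have "(a, b + 2) \<in> insert_arc (Suc a) (Suc b) M"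
    using open_gap_arc_mem_insert_arc[of "Suc a" "Suc b" a b M] ab matching_arc_less open_gap_endpoints by simp
  then show ?thesis unfolding occ21_arcs_def insert_arc_def by simp
qed

lemma occ21_arcs_insert_arc_image:
  assumes pq: "(p, q) \<in> M" "(p, q) \<noteq> (a, b)"
  shows "(open_gap (Suc a) (Suc b) p, open_gap (Suc a) (Suc b) q) \<in> occ21_arcs (insert_arc (Suc a) (Suc b) M)
    \<longleftrightarrow> (p, q) \<in> occ21_arcs M"
    (is "(?p, ?q) \<in> _ \<longleftrightarrow> _")
proof
  assume "(?p, ?q) \<in> occ21_arcs (insert_arc (Suc a) (Suc b) M)"
  then have inner: "(Suc ?p, ?q - 1) \<in> insert_arc (Suc a) (Suc b) M" unfolding occ21_arcs_def by simp
  have "p \<noteq> a" using matching_other_arc[OF M ab pq] by simp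
  then have "?p \<noteq> a"
    using open_gap_endpoints(1) open_gap_eq_iff[of "Suc a" "Suc b" p a] matching_arc_less by simp
  then obtain s t where st: "(s, t) \<in> M"
    "open_gap (Suc a) (Suc b) s = Suc ?p" "open_gap (Suc a) (Suc b) t = ?q - 1"
    using inner unfolding insert_arc_def by auto
  have "s = Suc p" using open_gap_eq_Suc[OF _ st(2)] matching_arc_less by simp
  moreover have "?p < ?q" using matching_arcD[OF M pq(1)] matching_arc_less by simp
  then have "open_gap (Suc a) (Suc b) q = Suc (open_gap (Suc a) (Suc b) t)" using st(3) by simp
  then have "q = Suc t" using open_gap_eq_Suc[of "Suc a" "Suc b" q t] matching_arc_less by simp
  ultimately show "(p, q) \<in> occ21_arcs M" using st(1) pq(1) unfolding occ21_arcs_def by simp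
next
  assume "(p, q) \<in> occ21_arcs M"
  then have inner: "(Suc p, q - 1) \<in> M" unfolding occ21_arcs_def by simp
  have "1 \<le> q" using matching_arcD[OF M pq(1)] by simp
  have pq_out: "p \<notin> {a, b} \<and> q \<notin> {a, b}" using matching_other_arc[OF M ab pq] .
  have inner_out: "Suc p \<noteq> b \<and> q - 1 \<noteq> a"
  proof (cases "(Suc p, q - 1) = (a, b)")
    case False
    then show ?thesis using matching_other_arc[OF M ab inner] by simp
  qed (use matching_arc_less in simp)
  have "open_gap (Suc a) (Suc b) (Suc p) = Suc ?p"
    using pq_out inner_out matching_arc_less by (intro open_gap_Suc) auto
  moreover have "open_gap (Suc a) (Suc b) (Suc (q - 1)) = Suc (open_gap (Suc a) (Suc b) (q - 1))"
    using pq_out inner_out matching_arc_less \<open>1 \<le> q\<close> by (intro open_gap_Suc) auto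
  then have "open_gap (Suc a) (Suc b) (q - 1) = ?q - 1" using \<open>1 \<le> q\<close> by simp
  ultimately have "(Suc ?p, ?q - 1) \<in> insert_arc (Suc a) (Suc b) M"
    using open_gap_arc_mem_insert_arc[of "Suc a" "Suc b" "Suc p" "q - 1" M] inner matching_arc_less by simp
  moreover have "(?p, ?q) \<in> insert_arc (Suc a) (Suc b) M" using pq(1) matching_arc_less by simp
  ultimately show "(?p, ?q) \<in> occ21_arcs (insert_arc (Suc a) (Suc b) M)" unfolding occ21_arcs_def by simp
qed

lemma occ21_arcs_insert_arc:
  "occ21_arcs (insert_arc (Suc a) (Suc b) M) =
     map_prod (open_gap (Suc a) (Suc b)) (open_gap (Suc a) (Suc b)) ` insert (a, b) (occ21_arcs M)
     \<union> (if (a, b) \<in> occ21_arcs M then {(Suc a, Suc b)} else {})"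
  (is "?N = ?\<phi> ` ?A \<union> ?B")
proof (intro equalityI subsetI)
  fix f assume f: "f \<in> ?N"
  then have "f \<in> insert_arc (Suc a) (Suc b) M" unfolding occ21_arcs_def by auto
  then consider "f = (Suc a, Suc b)" | p q where "(p, q) \<in> M" "f = ?\<phi> (p, q)"
    unfolding insert_arc_def by auto
  then show "f \<in> ?\<phi> ` ?A \<union> ?B"
  proof cases
    case 1
    then show ?thesis using f occ21_arcs_insert_arc_new by simp
  next
    case 2
    then show ?thesis
      using f occ21_arcs_insert_arc_image[OF 2(1)] by (cases "(p, q) = (a, b)") auto
  qed
next
  fix f assume "f \<in> ?\<phi> ` ?A \<union> ?B"
  then consider "f = ?\<phi> (a, b)" | p q where "(p, q) \<in> occ21_arcs M" "(p, q) \<noteq> (a, b)" "f = ?\<phi> (p, q)"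
    | "(a, b) \<in> occ21_arcs M" "f = (Suc a, Suc b)"
    by (auto split: if_splits)
  then show "f \<in> ?N"
  proof cases
    case 1
    then show ?thesis using occ21_arcs_insert_arc_outer open_gap_endpoints by simp
  next
    case 2
    then have "(p, q) \<in> M" unfolding occ21_arcs_def by simp
    then show ?thesis using occ21_arcs_insert_arc_image 2 by simp
  next
    case 3
    then show ?thesis using occ21_arcs_insert_arc_new by simp
  qed
qed

lemma card_occ21_arcs_insert_arc:
  "card (occ21_arcs (insert_arc (Suc a) (Suc b) M)) = Suc (card (occ21_arcs M))"
proof -
  let ?\<phi> = "map_prod (open_gap (Suc a) (Suc b)) (open_gap (Suc a) (Suc b))"
  have fin: "finite (occ21_arcs M)" using finite_occ21_arcs[OF M] .
  have "inj ?\<phi>" using matching_arc_less by (simp add: prod.inj_map inj_def)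
  then have card_image: "card (?\<phi> ` insert (a, b) (occ21_arcs M)) = card (insert (a, b) (occ21_arcs M))"
    by (meson card_image inj_on_subset subset_UNIV)
  have new: "(Suc a, Suc b) \<notin> ?\<phi> ` insert (a, b) (occ21_arcs M)"
    using open_gap_neq[of "Suc a" "Suc b"] matching_arc_less by (auto dest: sym)
  show ?thesis
  proof (cases "(a, b) \<in> occ21_arcs M")
    case True
    then have "card (occ21_arcs (insert_arc (Suc a) (Suc b) M))
        = Suc (card (?\<phi> ` insert (a, b) (occ21_arcs M)))"
      using new fin by (simp add: occ21_arcs_insert_arc)
    then show ?thesis using card_image True by (simp add: insert_absorb)
  next
    case False
    then show ?thesis using card_image fin by (simp add: occ21_arcs_insert_arc)
  qed
qed

end

definition matchings_occ :: "nat \<Rightarrow> nat \<Rightarrow> (nat \<times> nat) set set" where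
  "matchings_occ n k = {M \<in> matchings n. card (occ21_arcs M) = k}"

lemma a_nk_eq_card_matchings_occ: "a_nk n k = card (matchings_occ n k)"
  unfolding a_nk_def matchings_occ_def
  using occ21_eq_card_occ21_arcs by (metis (mono_tags) in_matchings_iff)

lemma finite_matchings_occ: "finite (matchings_occ n k)"
  using finite_matchings unfolding matchings_occ_def by simp

lemma insert_arc_in_matchings_occ:
  assumes M: "M \<in> matchings_occ (Suc n) k" and ab: "(a, b) \<in> M"
  shows "insert_arc (Suc a) (Suc b) M \<in> matchings_occ (Suc (Suc n)) (Suc k)"
proof -
  have M': "is_matching (Suc n) M" using M by (simp add: matchings_occ_def in_matchings_iff)
  have "1 \<le> a" "a < b" "b \<le> 2 * Suc n" using matching_arcD[OF M' ab] by auto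
  then have "is_matching (Suc (Suc n)) (insert_arc (Suc a) (Suc b) M)"
    by (intro insert_arc_is_matching[OF M']) auto
  then show ?thesis
    using M card_occ21_arcs_insert_arc[OF M' ab] by (simp add: matchings_occ_def in_matchings_iff)
qed

lemma matchings_occ_remove_arc:
  assumes N: "N \<in> matchings_occ (Suc (Suc n)) (Suc k)" and pq: "(p, q) \<in> occ21_arcs N"
  obtains M where "M \<in> matchings_occ (Suc n) k" "(p, q - 2) \<in> M"
    "N = insert_arc (Suc p) (Suc (q - 2)) M" "q - 2 + 2 = q"
proof -
  have N': "is_matching (Suc (Suc n)) N" using N by (simp add: matchings_occ_def in_matchings_iff)
  have pq': "(p, q) \<in> N" "(Suc p, q - 1) \<in> N" using pq unfolding occ21_arcs_def by auto
  have "Suc p < q - 1" using matching_arcD[OF N' pq'(2)] by simp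
  then have q: "q - 2 + 2 = q" and q1: "Suc (q - 2) = q - 1" by auto
  define M where "M = remove_arc (Suc p) (q - 1) N"
  have M: "is_matching (Suc n) M" unfolding M_def by (rule remove_arc_is_matching[OF N' pq'(2)])
  have N_eq: "N = insert_arc (Suc p) (Suc (q - 2)) M"
    unfolding M_def q1 using insert_remove_arc[OF N' pq'(2)] by simp
  have "(close_gap (Suc p) (q - 1) p, close_gap (Suc p) (q - 1) q) \<in> M"
    unfolding M_def remove_arc_def using pq'(1) \<open>Suc p < q - 1\<close> by force
  moreover have "close_gap (Suc p) (q - 1) p = p" "close_gap (Suc p) (q - 1) q = q - 2"
    using \<open>Suc p < q - 1\<close> unfolding close_gap_def by auto
  ultimately have pq_M: "(p, q - 2) \<in> M" by simp
  have "Suc (card (occ21_arcs M)) = Suc k"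
    using card_occ21_arcs_insert_arc[OF M pq_M] N N_eq by (simp add: matchings_occ_def)
  then have "M \<in> matchings_occ (Suc n) k" using M by (simp add: matchings_occ_def in_matchings_iff)
  then show thesis using pq_M N_eq q by (rule that)
qed

lemma bij_betw_insert_arc_marked:
  "bij_betw (\<lambda>(M, (a, b)). (insert_arc (Suc a) (Suc b) M, (a, b + 2)))
     (SIGMA M : matchings_occ (Suc n) k. M) (SIGMA N : matchings_occ (Suc (Suc n)) (Suc k). occ21_arcs N)"
  (is "bij_betw ?\<psi> ?S2 ?S1")
proof (rule bij_betw_imageI)
  show "inj_on ?\<psi> ?S2"
  proof (rule inj_onI)
    fix u v assume u: "u \<in> ?S2" and "v \<in> ?S2" and eq: "?\<psi> u = ?\<psi> v"
    obtain M a b where u_eq: "u = (M, (a, b))" by (metis prod.collapse)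
    obtain M' a' b' where v_eq: "v = (M', (a', b'))" by (metis prod.collapse)
    have "a' = a" "b' = b" and ins: "insert_arc (Suc a) (Suc b) M = insert_arc (Suc a) (Suc b) M'"
      using eq unfolding u_eq v_eq by auto
    have "a < b" using u unfolding u_eq
      by (auto simp: matchings_occ_def in_matchings_iff dest: matching_arcD)
    have "M = remove_arc (Suc a) (Suc b) (insert_arc (Suc a) (Suc b) M)" using \<open>a < b\<close> by simp
    also have "\<dots> = M'" using ins \<open>a < b\<close> by simp
    finally show "u = v" unfolding u_eq v_eq using \<open>a' = a\<close> \<open>b' = b\<close> by simp
  qed
  show "?\<psi> ` ?S2 = ?S1"
  proof (intro equalityI subsetI)
    fix v assume "v \<in> ?\<psi> ` ?S2"
    then obtain M a b where M: "M \<in> matchings_occ (Suc n) k" "(a, b) \<in> M" and v: "v = ?\<psi> (M, (a, b))"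
      by auto
    have "is_matching (Suc n) M" using M(1) by (simp add: matchings_occ_def in_matchings_iff)
    then show "v \<in> ?S1"
      using insert_arc_in_matchings_occ[OF M] occ21_arcs_insert_arc_outer M(2) unfolding v by simp
  next
    fix v assume "v \<in> ?S1"
    then obtain N p q where N: "N \<in> matchings_occ (Suc (Suc n)) (Suc k)" "(p, q) \<in> occ21_arcs N"
      and v: "v = (N, (p, q))" by auto
    obtain M where "M \<in> matchings_occ (Suc n) k" "(p, q - 2) \<in> M"
      "N = insert_arc (Suc p) (Suc (q - 2)) M" "q - 2 + 2 = q"
      using matchings_occ_remove_arc[OF N] .
    then have "(M, (p, q - 2)) \<in> ?S2" "v = ?\<psi> (M, (p, q - 2))" unfolding v by simp_all
    then show "v \<in> ?\<psi> ` ?S2" by blast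
  qed
qed

lemma card_matchings_occ_Suc:
  "Suc k * card (matchings_occ (Suc (Suc n)) (Suc k)) = Suc n * card (matchings_occ (Suc n) k)"
proof -
  have "card (SIGMA N : matchings_occ (Suc (Suc n)) (Suc k). occ21_arcs N)
      = (\<Sum>N \<in> matchings_occ (Suc (Suc n)) (Suc k). card (occ21_arcs N))"
    using finite_matchings_occ finite_occ21_arcs
    by (intro card_SigmaI) (auto simp: matchings_occ_def in_matchings_iff)
  also have "\<dots> = Suc k * card (matchings_occ (Suc (Suc n)) (Suc k))"
    by (simp add: matchings_occ_def)
  finally have card_S1: "card (SIGMA N : matchings_occ (Suc (Suc n)) (Suc k). occ21_arcs N)
      = Suc k * card (matchings_occ (Suc (Suc n)) (Suc k))" .
  have "card (SIGMA M : matchings_occ (Suc n) k. M) = (\<Sum>M \<in> matchings_occ (Suc n) k. card M)"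
    using finite_matchings_occ finite_matching
    by (intro card_SigmaI) (auto simp: matchings_occ_def in_matchings_iff)
  also have "\<dots> = (\<Sum>M \<in> matchings_occ (Suc n) k. Suc n)"
    by (rule sum.cong) (simp_all add: matchings_occ_def in_matchings_iff card_matching)
  finally have card_S2: "card (SIGMA M : matchings_occ (Suc n) k. M) = Suc n * card (matchings_occ (Suc n) k)"
    by simp
  show ?thesis
    using bij_betw_same_card[OF bij_betw_insert_arc_marked, of n k] unfolding card_S1 card_S2 by simp
qed

lemma occ21_arcs_matching_1:
  assumes M: "is_matching 1 M"
  shows "occ21_arcs M = {}"
proof -
  have False if "(p, q) \<in> M" "(Suc p, q - 1) \<in> M" for p q
    using matching_arcD[OF M that(1)] matching_arcD[OF M that(2)] by simp
  then show ?thesis unfolding occ21_arcs_def by auto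
qed

lemma sum_a_nk: "(\<Sum>k\<le>n. a_nk n k) = card (matchings n)"
proof -
  have "matchings n = (\<Union>k\<le>n. matchings_occ n k)"
  proof (intro equalityI subsetI)
    fix M assume "M \<in> matchings n"
    then have M: "is_matching n M" by (simp add: in_matchings_iff)
    have "card (occ21_arcs M) \<le> card M"
      using finite_matching[OF M] by (intro card_mono) (auto simp: occ21_arcs_def)
    then have "card (occ21_arcs M) \<le> n" by (simp only: card_matching[OF M])
    then show "M \<in> (\<Union>k\<le>n. matchings_occ n k)"
      using \<open>M \<in> matchings n\<close> unfolding matchings_occ_def by blast
  qed (unfold matchings_occ_def, blast)
  moreover have "card (\<Union>k\<le>n. matchings_occ n k) = (\<Sum>k\<le>n. card (matchings_occ n k))"
    by (rule card_UN_disjoint) (simp_all add: finite_matchings_occ, unfold matchings_occ_def, blast)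
  ultimately show ?thesis by (simp add: a_nk_eq_card_matchings_occ)
qed

lemma b_nk_0_Suc: "b_nk 0 (Suc k) = 0"
proof -
  have "matchings_occ 1 (Suc k) = {}"
    using occ21_arcs_matching_1 unfolding matchings_occ_def in_matchings_iff by fastforce
  then show ?thesis by (simp add: b_nk_def a_nk_eq_card_matchings_occ)
qed

lemma b_nk_Suc: "Suc k * b_nk (Suc n) (Suc k) = Suc n * b_nk n k"
  unfolding b_nk_def a_nk_eq_card_matchings_occ by (rule card_matchings_occ_Suc)

lemma sum_b_nk: "(\<Sum>k\<le>Suc n. b_nk n k) = card (matchings (Suc n))"
  unfolding b_nk_def by (rule sum_a_nk)

section \<open>Exponential generating functions\<close>

lemma fps_X_minus_1_power_nth:
  "((fps_X - 1) ^ i :: 'a :: comm_ring_1 fps) $ k = of_nat (i choose k) * (- 1) ^ (i - k)"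
proof -
  have X_minus_1: "(fps_X - 1 :: 'a fps) = fps_X + fps_const (- 1)"
    by (simp only: fps_const_neg[symmetric] fps_const_1_eq_1 diff_conv_add_uminus)
  show ?thesis
    unfolding X_minus_1 binomial_ring
    by (simp add: fps_sum_nth fps_of_nat[symmetric] fps_X_power_nth if_distrib[of "\<lambda>x. x * y" for y]
        if_distrib[of "\<lambda>x. y * x" for y] binomial_eq_0 cong: if_cong)
qed

lemma fps_X_power_exp_minus_1_nth:
  "(fps_const (1 / fact k) * fps_X ^ k * fps_exp (- 1) :: real fps) $ i = ((fps_X - 1) ^ i) $ k / fact i"
proof (cases "k \<le> i")
  case True
  have "(fps_const (1 / fact k) * fps_X ^ k * fps_exp (- 1) :: real fps) $ i
      = (- 1) ^ (i - k) / (fact k * fact (i - k))"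
    using True by (simp add: mult.assoc fps_X_power_mult_nth)
  also have "\<dots> = real (i choose k) * (- 1) ^ (i - k) / fact i"
    using True by (simp add: binomial_fact)
  finally show ?thesis by (simp add: fps_X_minus_1_power_nth)
qed (simp add: mult.assoc fps_X_power_mult_nth fps_X_minus_1_power_nth)

lemma exp_zu1_mult_fps_lift_nth:
  "(exp_zu1 * fps_lift G) $ n $ k = (fps_const (1 / fact k) * fps_X ^ k * fps_exp (- 1) * G) $ n"
proof -
  have "(exp_zu1 * fps_lift G) $ n
      = (\<Sum>i=0..n. fps_const (1 / fact i) * (fps_X - 1) ^ i * fps_const (G $ (n - i)))"
    by (simp add: fps_mult_nth exp_zu1_def fps_lift_def)
  then have "(exp_zu1 * fps_lift G) $ n $ k = (\<Sum>i=0..n. ((fps_X - 1) ^ i) $ k / fact i * G $ (n - i))"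
    by (simp add: fps_sum_nth)
  also have "\<dots> = (fps_const (1 / fact k) * fps_X ^ k * fps_exp (- 1) * G) $ n"
    unfolding fps_mult_nth[of "fps_const (1 / fact k) * fps_X ^ k * fps_exp (- 1)" G]
    by (simp add: fps_X_power_exp_minus_1_nth)
  finally show ?thesis .
qed

lemma fps_eq_inverse_radical_2:
  fixes F Q :: "real fps"
  assumes FQ: "F ^ 2 * Q = 1" and F0: "F $ 0 = 1"
  shows "F = inverse (fps_radical (\<lambda>k x. root k x) 2 Q)"
proof -
  have "(F ^ 2 * Q) $ 0 = 1" using FQ by simp
  then have Q0: "Q $ 0 = 1" using F0 by (simp add: fps_power_zeroth)
  have "inverse F ^ 2 = Q" using fps_inverse_unique[OF FQ] by (simp add: fps_inverse_power)
  moreover have "root 2 (Q $ 0) = inverse F $ 0" using Q0 F0 by simp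
  ultimately have "inverse F = fps_radical (\<lambda>k x. root k x) 2 Q"
    using radical_unique[of "\<lambda>k x. root k x" 1 Q "inverse F"] Q0 by (simp add: numeral_2_eq_2)
  then show ?thesis using F0 by (metis fps_inverse_idempotent zero_neq_one)
qed

lemma fps_square_mult_cube_const:
  fixes F :: "real fps"
  assumes ode: "(1 - 2 * fps_X) * fps_deriv F = 3 * F"
  shows "F ^ 2 * (1 - 2 * fps_X) ^ 3 = fps_const ((F $ 0) ^ 2)"
proof -
  define P :: "real fps" where "P = 1 - 2 * fps_X"
  have dP: "fps_deriv P = - 2" unfolding P_def by simp
  have "fps_deriv (F ^ 2 * P ^ 3) = 2 * F * P ^ 2 * (P * fps_deriv F - 3 * F)"
    by (simp add: fps_deriv_power dP algebra_simps power2_eq_square power3_eq_cube)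
  also have "\<dots> = 0" using ode unfolding P_def by simp
  finally have "F ^ 2 * P ^ 3 = fps_const ((F ^ 2 * P ^ 3) $ 0)" by (simp only: fps_deriv_eq_0_iff)
  then show ?thesis unfolding P_def by (simp add: fps_power_zeroth)
qed

lemma egf_odd_double_factorial:
  fixes d :: "nat \<Rightarrow> nat"
  assumes d0: "d 0 = 1" and d_Suc: "\<And>n. d (Suc n) = (2 * n + 3) * d n"
  shows "Abs_fps (\<lambda>n. real (d n) / fact n) = inverse sqrt_1m2z_cubed"
proof -
  define F where "F = Abs_fps (\<lambda>n. real (d n) / fact n)"
  have deriv_nth: "fps_deriv F $ n = (2 * real n + 3) * F $ n" for n
    using d_Suc[of n] by (simp add: F_def field_simps del: of_nat_Suc)
  have "(1 - 2 * fps_X) * fps_deriv F = 3 * F"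
  proof (rule fps_ext)
    fix n
    have "((1 - 2 * fps_X) * fps_deriv F) $ n = fps_deriv F $ n - 2 * (fps_X * fps_deriv F) $ n"
      by (simp add: algebra_simps numeral_fps_const)
    also have "\<dots> = 3 * F $ n"
    proof (cases n)
      case (Suc m)
      have "fps_deriv F $ m = real (Suc m) * F $ Suc m" by (simp add: fps_deriv_nth)
      then show ?thesis using deriv_nth[of n] unfolding Suc by (simp add: algebra_simps)
    qed (use deriv_nth[of 0] in simp)
    finally show "((1 - 2 * fps_X) * fps_deriv F) $ n = (3 * F) $ n" by (simp add: numeral_fps_const)
  qed
  then have "F ^ 2 * (1 - 2 * fps_X) ^ 3 = 1"
    using fps_square_mult_cube_const by (simp add: F_def d0)
  then have "F = inverse (fps_radical (\<lambda>k x. root k x) 2 ((1 - 2 * fps_X) ^ 3))"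
    by (rule fps_eq_inverse_radical_2) (simp add: F_def d0)
  then show ?thesis unfolding F_def sqrt_1m2z_cubed_def .
qed

lemma egf_column_eq:
  fixes f :: "nat \<Rightarrow> nat \<Rightarrow> nat"
  assumes f0: "\<And>k. f 0 (Suc k) = 0" and f_Suc: "\<And>n k. Suc k * f (Suc n) (Suc k) = Suc n * f n k"
  shows "Abs_fps (\<lambda>n. real (f n k) / fact n)
    = fps_const (1 / fact k) * fps_X ^ k * Abs_fps (\<lambda>n. real (f n 0) / fact n)"
proof (induction k)
  case (Suc k)
  have "Abs_fps (\<lambda>n. real (f n (Suc k)) / fact n)
      = fps_const (1 / Suc k) * fps_X * Abs_fps (\<lambda>n. real (f n k) / fact n)" (is "?L = ?R")
  proof (rule fps_ext)
    fix n
    show "?L $ n = ?R $ n"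
    proof (cases n)
      case (Suc m)
      have "real (Suc k) * real (f (Suc m) (Suc k)) = real (Suc m) * real (f m k)"
        using f_Suc[of k m] by (metis of_nat_mult)
      then show ?thesis unfolding Suc by (simp add: mult.assoc field_simps del: of_nat_Suc)
    qed (simp add: f0 mult.assoc)
  qed
  then show ?case
    unfolding Suc.IH by (simp add: mult_ac)
qed simp

lemma egf_row_sum:
  fixes g :: "nat \<Rightarrow> nat \<Rightarrow> real"
  assumes col: "\<And>k. Abs_fps (\<lambda>n. g n k) = fps_const (1 / fact k) * fps_X ^ k * C"
    and m: "\<And>n. n \<le> m n"
  shows "Abs_fps (\<lambda>n. \<Sum>k\<le>m n. g n k) = fps_exp 1 * C"
proof (rule fps_ext)
  fix n
  have g: "g n k = (if n < k then 0 else C $ (n - k) / fact k)" for k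
    using arg_cong[OF col[of k], of "\<lambda>F. F $ n"] by (simp add: mult.assoc fps_X_power_mult_nth)
  have "(\<Sum>k\<le>m n. g n k) = (\<Sum>k\<le>n. g n k)"
    using m[of n] by (intro sum.mono_neutral_right) (auto simp: g)
  also have "\<dots> = (fps_exp 1 * C) $ n"
    by (simp add: g fps_mult_nth atMost_atLeast0)
  finally show "Abs_fps (\<lambda>n. \<Sum>k\<le>m n. g n k) $ n = (fps_exp 1 * C) $ n" by simp
qed

lemma egf_matchings_Suc: "Abs_fps (\<lambda>n. real (card (matchings (Suc n))) / fact n) = inverse sqrt_1m2z_cubed"
proof (rule egf_odd_double_factorial)
  show "card (matchings (Suc 0)) = 1" by (simp add: card_matchings_Suc matchings_0)
  show "card (matchings (Suc (Suc n))) = (2 * n + 3) * card (matchings (Suc n))" for n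
    by (simp only: card_matchings_Suc[of "Suc n"]) (simp add: algebra_simps)
qed

theorem lemma4:
  shows "B_series = exp_zu1 * fps_lift (inverse sqrt_1m2z_cubed) \<and>
    (\<forall>k. Abs_fps (\<lambda>n. real (b_nk n k) / fact n)
           = fps_const (1 / fact k) * fps_X ^ k * fps_exp (-1) * inverse sqrt_1m2z_cubed)"
proof -
  define C where "C = Abs_fps (\<lambda>n. real (b_nk n 0) / fact n)"
  have col: "Abs_fps (\<lambda>n. real (b_nk n k) / fact n) = fps_const (1 / fact k) * fps_X ^ k * C" for k
    unfolding C_def using b_nk_0_Suc b_nk_Suc by (rule egf_column_eq)
  have "Abs_fps (\<lambda>n. \<Sum>k\<le>Suc n. real (b_nk n k) / fact n) = fps_exp 1 * C"
    using col by (rule egf_row_sum) simp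
  moreover have "Abs_fps (\<lambda>n. \<Sum>k\<le>Suc n. real (b_nk n k) / fact n) = inverse sqrt_1m2z_cubed"
    unfolding sum_divide_distrib[symmetric] of_nat_sum[symmetric] sum_b_nk by (rule egf_matchings_Suc)
  ultimately have "fps_exp 1 * C = inverse sqrt_1m2z_cubed" by simp
  moreover have "fps_exp (- 1) * fps_exp 1 = (1 :: real fps)"
    by (simp add: fps_exp_neg inverse_mult_eq_1)
  ultimately have "C = fps_exp (- 1) * inverse sqrt_1m2z_cubed"
    by (metis mult.assoc mult_1)
  then have columns: "Abs_fps (\<lambda>n. real (b_nk n k) / fact n)
      = fps_const (1 / fact k) * fps_X ^ k * fps_exp (- 1) * inverse sqrt_1m2z_cubed" for k
    using col by (simp add: mult.assoc)
  have "B_series = exp_zu1 * fps_lift (inverse sqrt_1m2z_cubed)"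
    by (intro fps_ext) (simp add: B_series_def exp_zu1_mult_fps_lift_nth flip: columns)
  with columns show ?thesis by blast
qed

end
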